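(* Let $E$ be the group of subsets of $\{1,2,3,4,5\}$ of even cardinality with symmetric difference as group operation (so $E\cong\boldsymbol{\mu}_2^4$), and for an even subset $A$ write $\iota_A$ for the corresponding element of $E$ (e.g. $\iota_{12}=\iota_{\{1,2\}}$). Let $W=E\rtimes\mathfrak{S}_5$, where $\mathfrak{S}_5$ acts on $E$ by permuting elements of subsets, so that $\sigma\iota_A\sigma^{-1}=\iota_{\sigma(A)}$ in $W$, and let $\rho\colon W\to\mathfrak{S}_5$ be the natural projection. Let $H\subset\operatorname{Ker}(\rho)=E$ be a subgroup of order at least $8$, and assume that the element $(1234)\in\mathfrak{S}_5\subset W$ normalizes $H$. Then $\iota_{12}\in H$.
   Context: $W$ is isomorphic to the Weyl group $W(\mathrm{D}_5)$; $\mathfrak{S}_5$ is the symmetric group on $\{1,\dots,5\}$ and $(1234)$ the $4$-cycle. *)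

theory Defs
  imports "HOL-Algebra.Group" "HOL-Combinatorics.Permutations"
begin

definition symdiff :: "nat set \<Rightarrow> nat set \<Rightarrow> nat set" where
  "symdiff A B = (A - B) \<union> (B - A)"

definition evensets :: "nat set set" where
  "evensets = {A. A \<subseteq> {1..5} \<and> even (card A)}"

text \<open>W = E \<rtimes> S_5, elements (A, sigma), with
  (A,p)(B,q) = (A symdiff p(B), p o q). Then sigma iota_A sigma^-1 = iota_{sigma(A)}.\<close>
definition W :: "(nat set \<times> (nat \<Rightarrow> nat)) monoid" where
  "W = \<lparr> carrier = {(A, p). A \<in> evensets \<and> p permutes {1..5}},
         monoid.mult = (\<lambda>(A, p) (B, q). (symdiff A (p ` B), p \<circ> q)),
         monoid.one = ({}, id) \<rparr>"

definition rho :: "nat set \<times> (nat \<Rightarrow> nat) \<Rightarrow> (nat \<Rightarrow> nat)" where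
  "rho x = snd x"

definition iota :: "nat set \<Rightarrow> nat set \<times> (nat \<Rightarrow> nat)" where
  "iota A = (A, id)"

definition cyc1234 :: "nat \<Rightarrow> nat" where
  "cyc1234 i = (if i = 1 then 2 else if i = 2 then 3 else if i = 3 then 4
                else if i = 4 then 1 else i)"

end

theory Submission
  imports Defs
begin

text \<open>Conjugation by \<open>c = (1234)\<close> maps \<open>\<iota>\<^sub>A\<close> to \<open>\<iota>\<^bsub>c(A)\<^esub>\<close>, and on the edges
  \<open>12, 23, 34, 14\<close> of the square \<open>1-2-3-4\<close> it acts as a rotation, so these form a single orbit.
  Hence if \<open>\<iota>\<^sub>1\<^sub>2 \<notin> H\<close>, no edge of the square lies in \<open>H\<close>. But for every even \<open>A\<close> other
  than \<open>\<emptyset>, 13, 24, 1234\<close>, either \<open>A\<close> itself or \<open>A \<triangle> c(A)\<close> (the product \<open>\<iota>\<^sub>A \<cdot> c \<iota>\<^sub>A c\<^sup>-\<^sup>1\<close>,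
  again in \<open>H\<close>) is such an edge. So \<open>H\<close> would have at most \<open>4 < 8\<close> elements.\<close>

definition square_edges :: "nat set set" where
  "square_edges = {{1,2}, {2,3}, {3,4}, {1,4}}"

lemma cyc1234_permutes: "cyc1234 permutes {1..5}"
proof -
  have "bij cyc1234"
  proof (rule o_bij[where g = "cyc1234 \<circ> cyc1234 \<circ> cyc1234"])
    show "cyc1234 \<circ> cyc1234 \<circ> cyc1234 \<circ> cyc1234 = id"
      by (auto simp: cyc1234_def fun_eq_iff)
    show "cyc1234 \<circ> (cyc1234 \<circ> cyc1234 \<circ> cyc1234) = id"
      by (auto simp: cyc1234_def fun_eq_iff)
  qed
  moreover have "\<forall>x. x \<notin> {1..5} \<longrightarrow> cyc1234 x = x"
    by (auto simp: cyc1234_def)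
  ultimately show ?thesis
    by (simp add: permutes_def bij_iff)
qed

text \<open>Stated at \<open>Suc 0\<close> rather than \<open>1\<close>, the form the simplifier normalises to.\<close>
lemma cyc1234_simps [simp]:
  "cyc1234 (Suc 0) = 2" "cyc1234 2 = 3" "cyc1234 3 = 4" "cyc1234 4 = Suc 0" "cyc1234 5 = 5"
  by (simp_all add: cyc1234_def)

lemma evensets_cases:
  assumes "A \<in> evensets"
  shows "A \<in> {{}, {1,2}, {2,3}, {3,4}, {1,4}, {1,3}, {2,4}, {1,2,3,4},
     {1,5}, {2,5}, {3,5}, {4,5}, {1,2,3,5}, {1,2,4,5}, {1,3,4,5}, {2,3,4,5}}"
proof -
  have "{1..5::nat} = {1,2,3,4,5}" by auto
  then have "A \<in> Pow {1,2,3,4,5}" "even (card A)"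
    using assms by (auto simp: evensets_def)
  then show ?thesis
    by (simp add: Pow_insert) (elim disjE exE conjE; simp)
qed

lemma square_edges_orbit:
  assumes "B \<in> square_edges"
  shows "{1,2} \<in> {B, cyc1234 ` B, cyc1234 ` cyc1234 ` B, cyc1234 ` cyc1234 ` cyc1234 ` B}"
  using assms unfolding square_edges_def
  by (elim insertE emptyE) (simp_all add: insert_commute)

lemma evensets_symdiff_cyc1234:
  assumes "A \<in> evensets"
  shows "A \<in> square_edges \<or> symdiff A (cyc1234 ` A) \<in> square_edges
    \<or> A \<in> {{}, {1,3}, {2,4}, {1,2,3,4}}"
  using evensets_cases[OF assms]
  unfolding square_edges_def symdiff_def
  by (elim insertE emptyE) (simp_all add: insert_Diff_if insert_commute)

lemma cyc1234_stable_subgroup_without_12: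
  assumes "S \<subseteq> evensets"
    and symdiff_closed: "\<And>A B. A \<in> S \<Longrightarrow> B \<in> S \<Longrightarrow> symdiff A B \<in> S"
    and cyc_stable: "\<And>A. A \<in> S \<Longrightarrow> cyc1234 ` A \<in> S"
    and "{1,2} \<notin> S"
  shows "S \<subseteq> {{}, {1,3}, {2,4}, {1,2,3,4}}"
proof
  have no_edge: "B \<notin> S" if "B \<in> square_edges" for B
  proof
    assume "B \<in> S"
    then have "{B, cyc1234 ` B, cyc1234 ` cyc1234 ` B, cyc1234 ` cyc1234 ` cyc1234 ` B} \<subseteq> S"
      by (simp add: cyc_stable)
    then show False
      using square_edges_orbit[OF that] \<open>{1,2} \<notin> S\<close> by blast
  qed
  fix A
  assume "A \<in> S"
  then have "A \<notin> square_edges" "symdiff A (cyc1234 ` A) \<notin> square_edges"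
    using no_edge symdiff_closed cyc_stable by blast+
  then show "A \<in> {{}, {1,3}, {2,4}, {1,2,3,4}}"
    using evensets_symdiff_cyc1234 \<open>A \<in> S\<close> assms(1) by blast
qed

lemma kernel_rho_eq: "{x \<in> carrier W. rho x = id} = iota ` evensets"
  by (auto simp: W_def rho_def iota_def permutes_id)

lemma iota_mult: "iota A \<otimes>\<^bsub>W\<^esub> iota B = iota (symdiff A B)"
  by (simp add: W_def iota_def)

lemma W_inv_perm:
  assumes p: "p permutes {1..5}"
  shows "inv\<^bsub>W\<^esub> ({}, p) = ({}, inv_into UNIV p)"
  unfolding m_inv_def
proof (rule the_equality)
  have "inv_into UNIV p permutes {1..5}" "{} \<in> evensets"
    using permutes_inv[OF p] by (auto simp: evensets_def)
  then show "({}, inv_into UNIV p) \<in> carrier W \<and> ({}, p) \<otimes>\<^bsub>W\<^esub> ({}, inv_into UNIV p) = \<one>\<^bsub>W\<^esub>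
      \<and> ({}, inv_into UNIV p) \<otimes>\<^bsub>W\<^esub> ({}, p) = \<one>\<^bsub>W\<^esub>"
    using p by (simp add: W_def symdiff_def permutes_inv_o)
next
  fix y
  assume y: "y \<in> carrier W \<and> ({}, p) \<otimes>\<^bsub>W\<^esub> y = \<one>\<^bsub>W\<^esub> \<and> y \<otimes>\<^bsub>W\<^esub> ({}, p) = \<one>\<^bsub>W\<^esub>"
  obtain D q where y_eq: "y = (D, q)" by fastforce
  from y have "p ` D = {}" "p \<circ> q = id" "q \<circ> p = id"
    by (auto simp: W_def y_eq symdiff_def)
  then have "D = {}" "q = inv_into UNIV p"
    using inv_unique_comp by auto
  then show "y = ({}, inv_into UNIV p)"
    using y_eq by simp
qed

lemma W_conj_iota:
  assumes "p permutes {1..5}"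
  shows "({}, p) \<otimes>\<^bsub>W\<^esub> iota A \<otimes>\<^bsub>W\<^esub> inv\<^bsub>W\<^esub> ({}, p) = iota (p ` A)"
  unfolding W_inv_perm[OF assms]
  using assms by (simp add: W_def iota_def symdiff_def permutes_inv_o)

theorem lemma3p2:
  fixes H :: "(nat set \<times> (nat \<Rightarrow> nat)) set"
  assumes "subgroup H W"
    and "H \<subseteq> {x \<in> carrier W. rho x = id}"
    and "card H \<ge> 8"
    and "(\<lambda>h. ({}, cyc1234) \<otimes>\<^bsub>W\<^esub> h \<otimes>\<^bsub>W\<^esub> inv\<^bsub>W\<^esub> ({}, cyc1234)) ` H = H"
  shows "iota {1, 2} \<in> H"
proof (rule ccontr)
  define S where "S = {A. iota A \<in> H}"
  have H_eq: "H = iota ` S" and "S \<subseteq> evensets"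
    using assms(2) by (auto simp: S_def kernel_rho_eq iota_def)
  have "symdiff A B \<in> S" if "A \<in> S" "B \<in> S" for A B
    using that subgroup.m_closed[OF assms(1), of "iota A" "iota B"] by (simp add: S_def iota_mult)
  moreover have "cyc1234 ` A \<in> S" if "A \<in> S" for A
  proof -
    have "({}, cyc1234) \<otimes>\<^bsub>W\<^esub> iota A \<otimes>\<^bsub>W\<^esub> inv\<^bsub>W\<^esub> ({}, cyc1234) \<in> H"
      using that assms(4) by (metis (no_types, lifting) S_def imageI mem_Collect_eq)
    then show ?thesis
      by (simp add: S_def W_conj_iota[OF cyc1234_permutes])
  qed
  moreover assume "iota {1, 2} \<notin> H"
  ultimately have S_small: "S \<subseteq> {{}, {1,3}, {2,4}, {1,2,3,4}}"
    using \<open>S \<subseteq> evensets\<close> by (intro cyc1234_stable_subgroup_without_12) (auto simp: S_def)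
  have "card H = card S"
    unfolding H_eq by (rule card_image) (simp add: inj_on_def iota_def)
  also have "\<dots> \<le> card (set [{}, {1,3}, {2,4}, {1,2,3,4::nat}])"
    using S_small by (intro card_mono) auto
  also have "\<dots> \<le> 4"
    by (rule card_length[THEN le_trans]) simp
  finally show False
    using assms(3) by simp
qed

end
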